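(* Let $R$ be an integral domain with units $q,\lambda,x,q_0$ and elements $A,q_1$, $\delta=q-q^{-1}$, $x\delta=\delta-\lambda+\lambda^{-1}$, and let $\mathrm{BB}_2$ be as in the context. If $e_1\in\mathrm{BB}_2$ has vanishing annihilator ideal in $R$ (i.e. $re_1=0$ with $r\in R$ implies $r=0$), then $A(1-q_0\lambda)=q_1x$. If in addition $e_1$ and $Ye_1$ are $R$-linearly independent, then $q_0-q_0^{-1}=-\delta$.
   Context: $\mathrm{BB}_2=\mathrm{BB}_2(R)$ is the unital associative $R$-algebra generated by invertible $Y,X_1$ and an element $e_1$ subject to: $X_1e_1=e_1X_1=\lambda e_1$, $e_1^2=xe_1$, $X_1^{-1}=X_1-\delta+\delta e_1$, $X_1^2=1+\delta X_1-\delta\lambda e_1$, $X_1YX_1Y=YX_1YX_1$, $Y^2=q_1Y+q_0$, $YX_1Ye_1=e_1$, $e_1Ye_1=Ae_1$. (No relation between $A$, $q_0$ and the other parameters is assumed here.) *)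

theory Defs
  imports Main
begin

text \<open>A unital associative R-algebra is modelled as a ring 'a together with a
  ring homomorphism phi : R -> 'a whose image is central; r . a := phi r * a.\<close>
definition alg_str :: "('r::comm_ring_1 \<Rightarrow> 'a::ring_1) \<Rightarrow> bool" where
  "alg_str phi \<longleftrightarrow> phi 1 = 1 \<and> (\<forall>a b. phi (a + b) = phi a + phi b)
     \<and> (\<forall>a b. phi (a * b) = phi a * phi b) \<and> (\<forall>r z. phi r * z = z * phi r)"

definition BB2_rels :: "('r::comm_ring_1 \<Rightarrow> 'a::ring_1) \<Rightarrow> 'r \<Rightarrow> 'r \<Rightarrow> 'r \<Rightarrow> 'r \<Rightarrow> 'r \<Rightarrow> 'r
    \<Rightarrow> 'a \<Rightarrow> 'a \<Rightarrow> 'a \<Rightarrow> bool" where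
  "BB2_rels phi lam x delta q0 q1 A Y X1 e1 \<longleftrightarrow>
     (\<exists>Yi. Y * Yi = 1 \<and> Yi * Y = 1) \<and>
     (\<exists>X1i. X1 * X1i = 1 \<and> X1i * X1 = 1 \<and> X1i = X1 - phi delta + phi delta * e1) \<and>
     X1 * e1 = phi lam * e1 \<and> e1 * X1 = phi lam * e1 \<and>
     e1 * e1 = phi x * e1 \<and>
     X1 * X1 = 1 + phi delta * X1 - phi (delta * lam) * e1 \<and>
     X1 * Y * X1 * Y = Y * X1 * Y * X1 \<and>
     Y * Y = phi q1 * Y + phi q0 \<and>
     Y * X1 * Y * e1 = e1 \<and>
     e1 * Y * e1 = phi A * e1"

end

theory Submission
  imports Defs
begin

text \<open>The quadratic relation makes \<open>Y\<close> invertible with inverse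
  \<open>q\<^sub>0\<^sup>-\<^sup>1(Y - q\<^sub>1)\<close>, so \<open>Y X\<^sub>1 Y e\<^sub>1 = e\<^sub>1\<close>
  shows that \<open>X\<^sub>1\<close> maps \<open>Y e\<^sub>1\<close> into the \<open>R\<close>-span of \<open>e\<^sub>1\<close> and \<open>Y e\<^sub>1\<close>;
  so do \<open>X\<^sub>1\<close> on \<open>e\<^sub>1\<close> and left multiplication by \<open>e\<^sub>1\<close>.
  Evaluating \<open>e\<^sub>1 X\<^sub>1 Y e\<^sub>1\<close> once via \<open>e\<^sub>1 X\<^sub>1 = \<lambda> e\<^sub>1\<close> and once via this span
  gives a multiple of \<open>e\<^sub>1\<close> that must vanish, which is the first identity.
  Writing \<open>Y e\<^sub>1 = X\<^sub>1\<^sup>-\<^sup>1(X\<^sub>1 Y e\<^sub>1)\<close> with \<open>X\<^sub>1\<^sup>-\<^sup>1 = X\<^sub>1 - \<delta> + \<delta> e\<^sub>1\<close> expresses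
  \<open>Y e\<^sub>1\<close> in the span once more; comparing the coefficients of \<open>Y e\<^sub>1\<close> gives
  \<open>q\<^sub>0\<^sup>-\<^sup>2 - \<delta> q\<^sub>0\<^sup>-\<^sup>1 = 1\<close>, the second identity.\<close>

locale central_hom =
  fixes phi :: "'r::comm_ring_1 \<Rightarrow> 'a::ring_1"
  assumes alg_str: "alg_str phi"
begin

lemma hom_one [simp]: "phi 1 = 1"
  and hom_add [simp]: "phi (a + b) = phi a + phi b"
  and hom_mult [simp]: "phi (a * b) = phi a * phi b"
  and central: "phi r * z = z * phi r"
  using alg_str unfolding alg_str_def by blast+

lemma hom_zero [simp]: "phi 0 = 0"
  using hom_add[of 0 0] by simp

lemma hom_uminus [simp]: "phi (- a) = - phi a"
  using hom_add[of a "- a"] by (metis add.right_inverse hom_zero minus_unique)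

lemma hom_diff [simp]: "phi (a - b) = phi a - phi b"
  using hom_add[of a "- b"] by simp

lemma mult_hom_left_commute: "z * (phi r * w) = phi r * (z * w)"
  by (metis central mult.assoc)

end

locale BB2 = central_hom phi
  for phi :: "'r::comm_ring_1 \<Rightarrow> 'a::ring_1" +
  fixes lam x delta q0 q0i q1 A :: 'r
    and Y X1 e1 :: 'a
  assumes rels: "BB2_rels phi lam x delta q0 q1 A Y X1 e1"
    and q0_inverse: "q0 * q0i = 1"
begin

lemma X1_e1: "X1 * e1 = phi lam * e1"
  and e1_X1: "e1 * X1 = phi lam * e1"
  and e1_e1: "e1 * e1 = phi x * e1"
  and Y_Y: "Y * Y = phi q1 * Y + phi q0"
  and Y_X1_Y_e1: "Y * X1 * Y * e1 = e1"
  and e1_Y_e1: "e1 * Y * e1 = phi A * e1"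
  using rels unfolding BB2_rels_def by auto

lemma X1_left_inverse: "(X1 - phi delta + phi delta * e1) * X1 = 1"
  using rels unfolding BB2_rels_def by auto

lemma Y_left_inverse: "phi q0i * (Y - phi q1) * Y = 1"
proof -
  have "phi q0i * (Y - phi q1) * Y = phi q0i * (Y * Y - phi q1 * Y)"
    using central[of q1 Y] by (simp add: algebra_simps)
  also have "\<dots> = phi (q0i * q0)"
    by (simp add: Y_Y)
  finally show ?thesis
    using q0_inverse by (simp add: mult.commute)
qed

definition comb :: "'r \<Rightarrow> 'r \<Rightarrow> 'a" where
  "comb r s = phi r * e1 + phi s * (Y * e1)"

lemma comb_zero_right: "comb r 0 = phi r * e1"
  by (simp add: comb_def)

lemma Y_e1_eq_comb: "Y * e1 = comb 0 1"
  by (simp add: comb_def)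

lemma comb_add: "comb r s + comb r' s' = comb (r + r') (s + s')"
  by (simp add: comb_def algebra_simps)

lemma comb_diff: "comb r s - comb r' s' = comb (r - r') (s - s')"
  by (simp add: comb_def algebra_simps)

lemma scale_comb: "phi c * comb r s = comb (c * r) (c * s)"
  by (simp add: comb_def algebra_simps)

lemma X1_Y_e1: "X1 * (Y * e1) = comb (- q0i * q1) q0i"
proof -
  have "X1 * (Y * e1) = phi q0i * (Y - phi q1) * Y * (X1 * (Y * e1))"
    by (simp add: Y_left_inverse)
  also have "\<dots> = phi q0i * (Y - phi q1) * e1"
    using Y_X1_Y_e1 by (simp add: mult.assoc)
  also have "\<dots> = comb 0 q0i - comb (q0i * q1) 0"
    by (simp add: comb_def algebra_simps)
  finally show ?thesis
    by (simp add: comb_diff)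
qed

lemma X1_comb: "X1 * comb r s = comb (r * lam - s * q0i * q1) (s * q0i)"
proof -
  have "X1 * comb r s = phi r * (X1 * e1) + phi s * (X1 * (Y * e1))"
    by (simp add: comb_def distrib_left mult_hom_left_commute)
  also have "\<dots> = phi r * comb lam 0 + phi s * comb (- q0i * q1) q0i"
    by (simp add: X1_e1 X1_Y_e1 comb_zero_right)
  finally show ?thesis
    by (simp add: scale_comb comb_add algebra_simps)
qed

lemma e1_comb: "e1 * comb r s = comb (r * x + s * A) 0"
proof -
  have "e1 * comb r s = phi r * (e1 * e1) + phi s * (e1 * Y * e1)"
    by (simp add: comb_def distrib_left mult_hom_left_commute mult.assoc)
  also have "\<dots> = phi r * comb x 0 + phi s * comb A 0"
    by (simp add: e1_e1 e1_Y_e1 comb_zero_right)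
  finally show ?thesis
    by (simp add: scale_comb comb_add algebra_simps)
qed

lemma e1_X1_Y_e1: "comb (lam * A) 0 = comb (q0i * (A - q1 * x)) 0"
proof -
  have "comb (lam * A) 0 = phi lam * (e1 * Y * e1)"
    unfolding comb_zero_right e1_Y_e1 by (simp add: mult.assoc)
  also have "\<dots> = e1 * (X1 * (Y * e1))"
    by (simp add: e1_X1 mult.assoc[symmetric])
  finally show ?thesis
    by (simp add: X1_Y_e1 e1_comb algebra_simps)
qed

lemma Y_e1_in_span: "\<exists>r. Y * e1 = comb r (q0i * q0i - delta * q0i)"
proof -
  define a where "a = - q0i * q1"
  have "Y * e1 = (X1 - phi delta + phi delta * e1) * (X1 * (Y * e1))"
    by (simp add: mult.assoc[symmetric] X1_left_inverse)
  also have "\<dots> = X1 * comb a q0i - phi delta * comb a q0i + phi delta * (e1 * comb a q0i)"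
    by (simp add: X1_Y_e1 a_def algebra_simps)
  also have "\<dots> = comb (a * lam - q0i * q0i * q1 - delta * a + delta * (a * x + q0i * A))
      (q0i * q0i - delta * q0i)"
    by (simp add: X1_comb e1_comb scale_comb comb_add comb_diff algebra_simps)
  finally show ?thesis ..
qed

end

theorem lemma3:
  fixes q qi lam lami x q0 q0i A q1 delta :: "'r::idom"
    and phi :: "'r \<Rightarrow> 'a::ring_1"
    and Y X1 e1 :: 'a
  assumes "q * qi = 1" and "lam * lami = 1" and "x dvd 1" and "q0 * q0i = 1"
    and "delta = q - qi"
    and "x * delta = delta - lam + lami"
    and "alg_str phi"
    and "BB2_rels phi lam x delta q0 q1 A Y X1 e1"
    and "\<forall>r. phi r * e1 = 0 \<longrightarrow> r = 0"
  shows "A * (1 - q0 * lam) = q1 * x \<and>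
    ((\<forall>r s. phi r * e1 + phi s * (Y * e1) = 0 \<longrightarrow> r = 0 \<and> s = 0)
       \<longrightarrow> q0 - q0i = - delta)"
proof -
  interpret BB2 phi lam x delta q0 q0i q1 A Y X1 e1
    using assms(4,7,8) by unfold_locales
  have "comb (lam * A - q0i * (A - q1 * x)) 0 = 0"
    using e1_X1_Y_e1 comb_diff by (metis right_minus_eq)
  then have "lam * A - q0i * (A - q1 * x) = 0"
    using assms(9) by (simp only: comb_zero_right)
  with assms(4) have annihilator_identity: "A * (1 - q0 * lam) = q1 * x"
    by algebra
  have "q0 - q0i = - delta"
    if independent: "\<forall>r s. phi r * e1 + phi s * (Y * e1) = 0 \<longrightarrow> r = 0 \<and> s = 0"
  proof -
    obtain r where "Y * e1 = comb r (q0i * q0i - delta * q0i)"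
      using Y_e1_in_span ..
    then have "comb (- r) (1 - (q0i * q0i - delta * q0i)) = 0"
      using Y_e1_eq_comb comb_diff by (metis diff_0 right_minus_eq)
    then have "1 - (q0i * q0i - delta * q0i) = 0"
      using independent by (simp only: comb_def)
    with assms(4) show ?thesis
      by algebra
  qed
  with annihilator_identity show ?thesis
    by blast
qed

end
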